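(* Let $d\ge 2$. There are a constant $C>0$ and $n_0(d)$ depending only on $d$ such that for all $n\ge n_0(d)$ the following holds. Let $\mathcal{F}$, $B_i$ be as in the context, let $J\subseteq[n]$ with $|J|\le n/4$, and let $K\ge 0$ be a real number with $|E(\mathcal{G}_J)|\ge\binom{n-|J|}{d}-Kn$. Let $\mathcal{S}\subseteq\binom{[n]\setminus J}{d-1}$ be the family of $(d-1)$-subsets of $[n]\setminus J$ that are contained in at most $100d+|J|$ edges of $\mathcal{G}_J$. Then $|\mathcal{S}|\le CK$.
   Context: Let $\mathcal{F}=\{F_1,\dots,F_m\}\subseteq\binom{[n]}{d+1}$ consist of distinct sets and have VC-dimension at most $d$ (no $(d+1)$-set $S$ is shattered, i.e. no $S$ such that every $A\subseteq S$ equals $F\cap S$ for some $F\in\mathcal{F}$). For $i\in[m]$, call $B\subsetneq F_i$ admissible for $F_i$ if $F\cap F_i\neq B$ for every $F\in\mathcal{F}$. For each $i$, $B_i$ is a fixed admissible set for $F_i$ of maximum cardinality among all admissible sets. For $J\subseteq[n]$, $\mathcal{G}_J$ is the $d$-uniform hypergraph on vertex set $[n]\setminus J$ with edge set $E(\mathcal{G}_J):=\{F_k\setminus J: k\in[m],\ |F_k\cap J|=1\}$. *)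

theory Defs
  imports Complex_Main
begin

definition shatters :: "nat set set \<Rightarrow> nat set \<Rightarrow> bool" where
  "shatters FF S \<longleftrightarrow> (\<forall>A. A \<subseteq> S \<longrightarrow> (\<exists>F\<in>FF. F \<inter> S = A))"

definition vc_dim_le :: "nat set set \<Rightarrow> nat \<Rightarrow> bool" where
  "vc_dim_le FF d \<longleftrightarrow> \<not> (\<exists>S. card S = d + 1 \<and> finite S \<and> shatters FF S)"

definition admissible :: "nat set set \<Rightarrow> nat set \<Rightarrow> nat set \<Rightarrow> bool" where
  "admissible FF Fi B \<longleftrightarrow> B \<subset> Fi \<and> (\<forall>F\<in>FF. F \<inter> Fi \<noteq> B)"

definition edgesG :: "nat set set \<Rightarrow> nat set \<Rightarrow> nat set set" where
  "edgesG FF J = {F - J | F. F \<in> FF \<and> card (F \<inter> J) = 1}"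

end

theory Submission
  imports Defs
begin

text \<open>Double count the pairs (T, X) with T a low-degree (d-1)-set and X \<supseteq> T a d-subset
  of [n] - J that is not an edge of G_J. Each such T lies in n - |J| - d + 1 d-sets, at most
  100 d + |J| of them edges, hence in at least n / 4 non-edges once n \<ge> 404 d; a non-edge
  contains only d sets of size d - 1, and the hypothesis on |E(G_J)| leaves at most K n
  non-edges. So |S| n / 4 \<le> d K n, i.e. C = 4 d works.\<close>

lemma double_counting_le:
  fixes R :: "'a \<Rightarrow> 'b \<Rightarrow> bool"
  assumes "finite S" "finite M"
    and "\<And>T. T \<in> S \<Longrightarrow> L \<le> card {X \<in> M. R T X}"
    and "\<And>X. X \<in> M \<Longrightarrow> card {T \<in> S. R T X} \<le> a"
  shows "card S * L \<le> a * card M"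
proof -
  have card_filter: "card {x \<in> A. P x} = (\<Sum>x\<in>A. if P x then 1 else 0)" if "finite A"
    for A :: "'c set" and P
    using sum.inter_filter[OF that, of "\<lambda>_. 1::nat" P] by simp
  have "card S * L = (\<Sum>T\<in>S. L)" by simp
  also have "\<dots> \<le> (\<Sum>T\<in>S. card {X \<in> M. R T X})" by (rule sum_mono) (rule assms(3))
  also have "\<dots> = (\<Sum>T\<in>S. \<Sum>X\<in>M. if R T X then 1 else 0)"
    using assms(2) by (simp add: card_filter)
  also have "\<dots> = (\<Sum>X\<in>M. \<Sum>T\<in>S. if R T X then 1 else 0)" by (rule sum.swap)
  also have "\<dots> = (\<Sum>X\<in>M. card {T \<in> S. R T X})"
    using assms(1) by (simp add: card_filter)
  also have "\<dots> \<le> (\<Sum>X\<in>M. a)" by (rule sum_mono) (rule assms(4))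
  finally show ?thesis by (simp add: mult.commute)
qed

lemma card_supersets_insert_one:
  assumes "finite U" "T \<subseteq> U"
  shows "card {X. X \<subseteq> U \<and> card X = card T + 1 \<and> T \<subseteq> X} = card U - card T"
proof -
  have "finite T" using assms finite_subset by blast
  have "{X. X \<subseteq> U \<and> card X = card T + 1 \<and> T \<subseteq> X} = (\<lambda>v. insert v T) ` (U - T)"
  proof (intro equalityI subsetI)
    fix X assume X: "X \<in> {X. X \<subseteq> U \<and> card X = card T + 1 \<and> T \<subseteq> X}"
    then have "card (X - T) = 1" using \<open>finite T\<close> by (simp add: card_Diff_subset)
    then obtain v where "X - T = {v}" by (auto simp: card_Suc_eq)
    then show "X \<in> (\<lambda>v. insert v T) ` (U - T)" using X by (intro image_eqI[of _ _ v]) auto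
  qed (use assms \<open>finite T\<close> in auto)
  moreover have "inj_on (\<lambda>v. insert v T) (U - T)" by (auto intro: inj_onI)
  ultimately show ?thesis using assms by (simp add: card_image card_Diff_subset \<open>finite T\<close>)
qed

lemma card_subsets_card_minus_one:
  assumes "finite X" "X \<noteq> {}"
  shows "card {T. T \<subseteq> X \<and> card T = card X - 1} = card X"
proof -
  have "card X \<ge> 1" using assms by (simp add: Suc_leI card_gt_0_iff)
  then show ?thesis
    using n_subsets[OF assms(1)] binomial_symmetric[of "card X - 1" "card X"]
    by (simp add: choose_one)
qed

lemma low_degree_subsets_card_le:
  assumes U: "finite U" and E: "E \<subseteq> {X. X \<subseteq> U \<and> card X = d}" and "d \<ge> 1"
  shows "card {T. T \<subseteq> U \<and> card T = d - 1 \<and> card {e \<in> E. T \<subseteq> e} \<le> t}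
           * (card U - (d - 1) - t)
         \<le> d * card ({X. X \<subseteq> U \<and> card X = d} - E)"
    (is "card ?S * _ \<le> d * card ?M")
proof (rule double_counting_le[where R = "(\<subseteq>)"])
  show "finite ?S" "finite ?M" using U by simp_all
  have "finite E" using E U by (simp add: finite_subset)
  fix T assume "T \<in> ?S"
  then have T: "T \<subseteq> U" "card T = d - 1" "card {e \<in> E. T \<subseteq> e} \<le> t" by auto
  have "{X. X \<subseteq> U \<and> card X = card T + 1 \<and> T \<subseteq> X} \<subseteq> {X \<in> ?M. T \<subseteq> X} \<union> {e \<in> E. T \<subseteq> e}"
    using T \<open>d \<ge> 1\<close> by auto
  then have "card {X. X \<subseteq> U \<and> card X = card T + 1 \<and> T \<subseteq> X}
      \<le> card ({X \<in> ?M. T \<subseteq> X} \<union> {e \<in> E. T \<subseteq> e})"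
    by (rule card_mono[rotated]) (use U \<open>finite E\<close> in simp)
  then have "card U - card T \<le> card ({X \<in> ?M. T \<subseteq> X} \<union> {e \<in> E. T \<subseteq> e})"
    unfolding card_supersets_insert_one[OF U T(1)] .
  also have "\<dots> \<le> card {X \<in> ?M. T \<subseteq> X} + card {e \<in> E. T \<subseteq> e}" by (rule card_Un_le)
  finally show "card U - (d - 1) - t \<le> card {X \<in> ?M. T \<subseteq> X}" using T by linarith
next
  fix X assume "X \<in> ?M"
  then have X: "finite X" "card X = d" using U finite_subset by auto
  then have "X \<noteq> {}" using \<open>d \<ge> 1\<close> by auto
  have "{T \<in> ?S. T \<subseteq> X} \<subseteq> {T. T \<subseteq> X \<and> card T = card X - 1}" using X by auto
  then show "card {T \<in> ?S. T \<subseteq> X} \<le> d"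
    using card_mono[of "{T. T \<subseteq> X \<and> card T = card X - 1}"]
      card_subsets_card_minus_one[OF X(1) \<open>X \<noteq> {}\<close>] X by simp
qed

lemma card_non_edges_le:
  assumes U: "finite U" and E: "E \<subseteq> {X. X \<subseteq> U \<and> card X = d}"
    and "real (card U choose d) - b \<le> real (card E)"
  shows "real (card ({X. X \<subseteq> U \<and> card X = d} - E)) \<le> b"
proof -
  have "card E \<le> card U choose d"
    using card_mono[OF _ E] U by (simp add: n_subsets)
  moreover have "card ({X. X \<subseteq> U \<and> card X = d} - E) = (card U choose d) - card E"
    using E U by (simp add: card_Diff_subset finite_subset n_subsets)
  ultimately show ?thesis using assms(3) by (simp add: of_nat_diff)
qed

lemma edgesG_subset_d_sets:
  assumes "FF \<subseteq> {A. A \<subseteq> {1..n} \<and> card A = d + 1}"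
  shows "edgesG FF J \<subseteq> {X. X \<subseteq> {1..n} - J \<and> card X = d}"
proof
  fix X assume "X \<in> edgesG FF J"
  then obtain F where F: "X = F - J" "F \<in> FF" "card (F \<inter> J) = 1"
    unfolding edgesG_def by auto
  have "F \<subseteq> {1..n}" "card F = d + 1" using F(2) assms by auto
  moreover have "finite F" using \<open>F \<subseteq> {1..n}\<close> finite_subset by blast
  ultimately show "X \<in> {X. X \<subseteq> {1..n} - J \<and> card X = d}"
    using F by (auto simp: card_Diff_subset_Int)
qed

theorem fact3p7:
  fixes d :: nat
  assumes "d \<ge> 2"
  shows "\<exists>C::real. C > 0 \<and> (\<exists>n0::nat. \<forall>n\<ge>n0.
    \<forall>(FF :: nat set set) (B :: nat set \<Rightarrow> nat set) (J :: nat set) (K :: real).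
      FF \<subseteq> {A. A \<subseteq> {1..n} \<and> card A = d + 1} \<longrightarrow>
      vc_dim_le FF d \<longrightarrow>
      (\<forall>Fi\<in>FF. admissible FF Fi (B Fi) \<and>
                 (\<forall>B'. admissible FF Fi B' \<longrightarrow> card B' \<le> card (B Fi))) \<longrightarrow>
      J \<subseteq> {1..n} \<longrightarrow> real (card J) \<le> real n / 4 \<longrightarrow>
      K \<ge> 0 \<longrightarrow>
      real (card (edgesG FF J)) \<ge> real ((n - card J) choose d) - K * real n \<longrightarrow>
      real (card {T. T \<subseteq> {1..n} - J \<and> card T = d - 1 \<and>
                   card {e \<in> edgesG FF J. T \<subseteq> e} \<le> 100 * d + card J})
        \<le> C * K)"
proof (intro exI[of _ "4 * real d"] conjI exI[of _ "404 * d"] allI impI)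
  fix n FF B J K
  assume n: "404 * d \<le> n" and FF: "FF \<subseteq> {A. A \<subseteq> {1..n} \<and> card A = d + 1}"
    and J: "J \<subseteq> {1..n}" "real (card J) \<le> real n / 4" and "K \<ge> 0"
    and E: "real ((n - card J) choose d) - K * real n \<le> real (card (edgesG FF J))"
  define U where "U = {1..n} - J"
  define S where "S = {T. T \<subseteq> U \<and> card T = d - 1 \<and> card {e \<in> edgesG FF J. T \<subseteq> e} \<le> 100 * d + card J}"
  have edges: "edgesG FF J \<subseteq> {X. X \<subseteq> U \<and> card X = d}"
    using edgesG_subset_d_sets[OF FF] unfolding U_def .
  have U: "finite U" "card U = n - card J" "card J \<le> n"
    using J(1) card_mono[OF _ J(1)] unfolding U_def by (auto simp: card_Diff_subset finite_subset)
  have non_edges: "real (card ({X. X \<subseteq> U \<and> card X = d} - edgesG FF J)) \<le> K * real n"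
    using card_non_edges_le[OF U(1) edges] E U(2) by simp
  have "4 * card J \<le> n" using J(2) by (simp add: field_simps flip: of_nat_le_iff)
  then have gap: "real n / 4 \<le> real (card U - (d - 1) - (100 * d + card J))"
    using n U(2,3) by (simp add: of_nat_diff)
  have "card S * (card U - (d - 1) - (100 * d + card J))
      \<le> d * card ({X. X \<subseteq> U \<and> card X = d} - edgesG FF J)"
    unfolding S_def by (rule low_degree_subsets_card_le[OF U(1) edges]) (use \<open>d \<ge> 2\<close> in simp)
  then have "real (card S) * real (card U - (d - 1) - (100 * d + card J))
      \<le> real d * real (card ({X. X \<subseteq> U \<and> card X = d} - edgesG FF J))"
    by (simp flip: of_nat_mult)
  also have "\<dots> \<le> real d * (K * real n)" using non_edges by (simp add: mult_left_mono)
  finally have "real (card S) * (real n / 4) \<le> (4 * real d * K) * (real n / 4)"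
    using mult_left_mono[OF gap, of "real (card S)"] by simp
  moreover have "real n > 0" using n \<open>d \<ge> 2\<close> by simp
  ultimately show "real (card {T. T \<subseteq> {1..n} - J \<and> card T = d - 1 \<and>
      card {e \<in> edgesG FF J. T \<subseteq> e} \<le> 100 * d + card J}) \<le> 4 * real d * K"
    unfolding S_def U_def by simp
qed (use assms in auto)

end
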